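(* Let $r\ge3$, $n>r$, $\lambda\in\Lambda(n,r)$ (regarded as an $n$-periodic sequence) and $1\le i\le n$. In $T$: (i) $E_i1_\lambda=1_{\lambda+\alpha_i}E_i$ if $\lambda_{i+1}>0$, and $E_i1_\lambda=0$ otherwise; (ii) $F_i1_\lambda=1_{\lambda-\alpha_i}F_i$ if $\lambda_i>0$, and $F_i1_\lambda=0$ otherwise.
   Context: $T$ is the $\mathbb{Q}(v)$-algebra with generators $E_i,F_i,K_i^{\pm1}$ ($1\le i\le n$, indices mod $n$) and relations: $K_iK_j=K_jK_i$; $K_iK_i^{-1}=K_i^{-1}K_i=1$; $K_iE_j=v^{\epsilon^+(i,j)}E_jK_i$; $K_iF_j=v^{-\epsilon^+(i,j)}F_jK_i$ ($\epsilon^+(i,j)=1$ if $j=i$, $-1$ if $j\equiv i-1\pmod n$, $0$ otherwise); $E_iF_j-F_jE_i=\delta_{ij}\frac{K_iK_{i+1}^{-1}-K_i^{-1}K_{i+1}}{v-v^{-1}}$; $E_iE_j=E_jE_i$, $F_iF_j=F_jF_i$ if $i-j\not\equiv\pm1$; $E_i^2E_j-(v+v^{-1})E_iE_jE_i+E_jE_i^2=0$, $F_i^2F_j-(v+v^{-1})F_iF_jF_i+F_jF_i^2=0$ if $i-j\equiv\pm1\pmod n$; $K_1\cdots K_n=v^r$; $\prod_{j=0}^r(K_i-v^j)=0$. $\Lambda(n,r)$: compositions of $r$ into $n$ nonnegative parts, extended $n$-periodically ($\lambda_{n+1}=\lambda_1$). $1_\lambda=\prod_{i=1}^n\prod_{s=1}^{\lambda_i}\frac{K_iv^{-s+1}-K_i^{-1}v^{s-1}}{v^s-v^{-s}}$.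 $\alpha_i\in\mathbb{Z}^n$ has $j$-th entry $1$ if $j\equiv i$, $-1$ if $j\equiv i+1\pmod n$, $0$ otherwise. *)

theory Defs
  imports "HOL-Computational_Algebra.Polynomial" "HOL-Computational_Algebra.Fraction_Field"
begin

type_synonym qv = "rat poly fract"

definition vq :: qv where "vq = Fract [:0, 1:] 1"

definition qv_algebra :: "(qv \<Rightarrow> 'a::ring_1) \<Rightarrow> bool" where
  "qv_algebra \<phi> \<longleftrightarrow> \<phi> 1 = 1 \<and> (\<forall>x y. \<phi> (x + y) = \<phi> x + \<phi> y) \<and>
     (\<forall>x y. \<phi> (x * y) = \<phi> x * \<phi> y) \<and> (\<forall>c a. \<phi> c * a = a * \<phi> c)"

definition eps_plus :: "nat \<Rightarrow> int \<Rightarrow> int \<Rightarrow> int" where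
  "eps_plus n i j = (if j mod int n = i mod int n then 1
                     else if j mod int n = (i - 1) mod int n then -1 else 0)"

definition alpha :: "nat \<Rightarrow> int \<Rightarrow> int \<Rightarrow> int" where
  "alpha n i j = (if j mod int n = i mod int n then 1
                  else if j mod int n = (i + 1) mod int n then -1 else 0)"

definition T_rels :: "nat \<Rightarrow> nat \<Rightarrow> (qv \<Rightarrow> 'a::ring_1) \<Rightarrow> (int \<Rightarrow> 'a) \<Rightarrow> (int \<Rightarrow> 'a)
    \<Rightarrow> (int \<Rightarrow> 'a) \<Rightarrow> (int \<Rightarrow> 'a) \<Rightarrow> bool" where
  "T_rels n r \<phi> E F K Kinv \<longleftrightarrow>
    (\<forall>i. E (i + int n) = E i \<and> F (i + int n) = F i \<and> K (i + int n) = K i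
         \<and> Kinv (i + int n) = Kinv i) \<and>
    (\<forall>i j. K i * K j = K j * K i) \<and>
    (\<forall>i. K i * Kinv i = 1 \<and> Kinv i * K i = 1) \<and>
    (\<forall>i j. K i * E j = \<phi> (vq powi eps_plus n i j) * E j * K i) \<and>
    (\<forall>i j. K i * F j = \<phi> (vq powi (- eps_plus n i j)) * F j * K i) \<and>
    (\<forall>i j. E i * F j - F j * E i =
        (if i mod int n = j mod int n
         then (K i * Kinv (i + 1) - Kinv i * K (i + 1)) * \<phi> (1 / (vq - inverse vq))
         else 0)) \<and>
    (\<forall>i j. (i - j) mod int n \<noteq> 1 mod int n \<and> (i - j) mod int n \<noteq> (-1) mod int n \<longrightarrow>
        E i * E j = E j * E i \<and> F i * F j = F j * F i) \<and>
    (\<forall>i j. (i - j) mod int n = 1 mod int n \<or> (i - j) mod int n = (-1) mod int n \<longrightarrow>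
        E i * E i * E j - \<phi> (vq + inverse vq) * E i * E j * E i + E j * E i * E i = 0 \<and>
        F i * F i * F j - \<phi> (vq + inverse vq) * F i * F j * F i + F j * F i * F i = 0) \<and>
    prod_list (map K [1..int n]) = \<phi> (vq ^ r) \<and>
    (\<forall>i. prod_list (map (\<lambda>j. K i - \<phi> (vq ^ j)) [0..<r+1]) = 0)"

text \<open>The idempotent 1_lambda (lam an n-periodic integer sequence; only
  used for compositions, where all entries are nonnegative).\<close>
definition one_lam :: "nat \<Rightarrow> (qv \<Rightarrow> 'a::ring_1) \<Rightarrow> (int \<Rightarrow> 'a) \<Rightarrow> (int \<Rightarrow> 'a)
    \<Rightarrow> (int \<Rightarrow> int) \<Rightarrow> 'a" where
  "one_lam n \<phi> K Kinv lam =
     prod_list (map (\<lambda>i. prod_list (map (\<lambda>s.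
        (K i * \<phi> (vq powi (- s + 1)) - Kinv i * \<phi> (vq powi (s - 1)))
          * \<phi> (1 / (vq powi s - vq powi (- s))))
       [1..lam i])) [1..int n])"

definition comp_nr :: "nat \<Rightarrow> nat \<Rightarrow> (int \<Rightarrow> int) \<Rightarrow> bool" where
  "comp_nr n r lam \<longleftrightarrow> (\<forall>i. lam (i + int n) = lam i) \<and> (\<forall>i. lam i \<ge> 0) \<and>
     sum lam {1..int n} = int r"

end

theory Submission
  imports Defs
begin

text \<open>
  Since \<open>\<Prod>\<^sub>j\<^sub>=\<^sub>0\<^sup>r (K\<^sub>a - v\<^sup>j) = 0\<close> has distinct roots, Lagrange interpolation in \<open>K\<^sub>a\<close>
  gives idempotents \<open>P\<^sub>a(m)\<close>, \<open>0 \<le> m \<le> r\<close>, summing to \<open>1\<close>, with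
  \<open>K\<^sub>a P\<^sub>a(m) = v\<^sup>m P\<^sub>a(m)\<close>; as \<open>E\<^sub>i\<close> scales \<open>K\<^sub>a\<close> by \<open>v\<^sup>\<alpha>\<close> with \<open>\<alpha> = \<alpha>\<^sub>i(a)\<close>, it moves
  \<open>P\<^sub>a(m)\<close> to \<open>P\<^sub>a(m + \<alpha>)\<close>. On \<open>P\<^sub>a(m)\<close> the \<open>a\<close>-th block of \<open>1\<^sub>\<lambda>\<close> acts by the
  Gaussian binomial \<open>[m, \<lambda>\<^sub>a]\<close>, which is \<open>0\<close> for \<open>m < \<lambda>\<^sub>a\<close> and \<open>1\<close> for \<open>m = \<lambda>\<^sub>a\<close>.
  Expanding \<open>1\<^sub>\<lambda>\<close> over tuples \<open>(m\<^sub>a)\<close>, only tuples \<open>m \<ge> \<lambda>\<close> survive, and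
  \<open>\<Prod>\<^sub>a K\<^sub>a = v\<^sup>r\<close> kills every tuple with \<open>\<Sum>\<^sub>a m\<^sub>a \<noteq> r = \<Sum>\<^sub>a \<lambda>\<^sub>a\<close>; hence
  \<open>1\<^sub>\<lambda> = \<Prod>\<^sub>a P\<^sub>a(\<lambda>\<^sub>a)\<close>. Moving \<open>E\<^sub>i\<close> (resp. \<open>F\<^sub>i\<close>) through this product shifts
  \<open>\<lambda>\<close> by \<open>\<alpha>\<^sub>i\<close> (resp. \<open>-\<alpha>\<^sub>i\<close>), and the result is \<open>0\<close> exactly when an entry
  becomes \<open>-1\<close>.
\<close>

lemma vq_nonzero: "vq \<noteq> 0"
  by (simp add: vq_def Zero_fract_def eq_fract)

lemma vq_power_eq_1_iff: "vq ^ k = 1 \<longleftrightarrow> k = 0"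
proof
  assume "vq ^ k = 1"
  moreover have "vq ^ k = Fract ([:0, 1:] ^ k) 1"
    by (induction k) (simp_all add: vq_def One_fract_def)
  ultimately have "([:0, 1:] :: rat poly) ^ k = 1"
    by (simp add: One_fract_def eq_fract)
  then show "k = 0"
    using degree_linear_power[of "0::rat" k] by simp
qed simp

lemma vq_powi_eq_1_iff: "vq powi m = 1 \<longleftrightarrow> m = 0"
proof (cases "m \<ge> 0")
  case True
  then show ?thesis
    using vq_power_eq_1_iff[of "nat m"] by (simp add: power_int_def)
next
  case False
  then show ?thesis
    using vq_power_eq_1_iff[of "nat (- m)"] by (simp add: power_int_def power_inverse)
qed

lemma vq_powi_eq_iff: "vq powi a = vq powi b \<longleftrightarrow> a = b"
proof -
  have "vq powi a = vq powi b \<longleftrightarrow> vq powi (a - b) = 1"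
    using vq_nonzero by (auto simp: power_int_diff)
  then show ?thesis by (simp add: vq_powi_eq_1_iff)
qed

lemma prod_list_map_commute:
  fixes f :: "'j \<Rightarrow> 'a::monoid_mult"
  assumes "\<And>x. x \<in> set xs \<Longrightarrow> f x * z = z * f x"
  shows "prod_list (map f xs) * z = z * prod_list (map f xs)"
  using assms by (induction xs) (simp_all, metis mult.assoc)

lemma prod_list_map_shift:
  fixes P :: "'j \<Rightarrow> 'm::plus \<Rightarrow> 'a::monoid_mult"
  assumes "\<And>j m. Y * P j m = P j (m + \<delta> j) * Y"
  shows "Y * prod_list (map (\<lambda>j. P j (\<mu> j)) js) = prod_list (map (\<lambda>j. P j (\<mu> j + \<delta> j)) js) * Y"
  by (induction js) (simp_all, metis assms mult.assoc)

lemma prod_list_sum_distrib: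
  fixes h :: "'j \<Rightarrow> 'm \<Rightarrow> 'a::semiring_1"
  assumes "finite M"
  shows "prod_list (map (\<lambda>j. \<Sum>m\<in>M. h j m) js)
    = (\<Sum>ms\<in>{ms. set ms \<subseteq> M \<and> length ms = length js}. prod_list (map2 h js ms))"
proof (induction js)
  case Nil
  have "{ms. set ms \<subseteq> M \<and> length ms = length []} = {[]}"
    by auto
  then show ?case by simp
next
  case (Cons j js)
  let ?T = "{ms. set ms \<subseteq> M \<and> length ms = length js}"
  have "prod_list (map (\<lambda>j. \<Sum>m\<in>M. h j m) (j # js))
      = (\<Sum>(ms, m)\<in>?T \<times> M. h j m * prod_list (map2 h js ms))"
    using Cons assms
    by (simp add: sum_distrib_left sum_distrib_right sum.cartesian_product sum.swap[of _ M])
  also have "\<dots> = (\<Sum>ms\<in>(\<lambda>(ms, m). m # ms) ` (?T \<times> M). prod_list (map2 h (j # js) ms))"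
    by (subst sum.reindex) (simp_all add: inj_split_Cons case_prod_beta)
  finally show ?case
    by (simp only: length_Cons lists_length_Suc_eq)
qed

lemma sum_list_le_of_list_all2:
  fixes xs ys :: "'a::ordered_comm_monoid_add list"
  shows "list_all2 (\<le>) xs ys \<Longrightarrow> sum_list xs \<le> sum_list ys"
  by (induction rule: list_all2_induct) (simp_all add: add_mono)

lemma sum_list_less_of_list_all2:
  fixes xs ys :: "'a::ordered_cancel_comm_monoid_add list"
  assumes "list_all2 (\<le>) xs ys" and "xs \<noteq> ys"
  shows "sum_list xs < sum_list ys"
  using assms
proof (induction rule: list_all2_induct)
  case (Cons x xs y ys)
  show ?case
  proof (cases "x = y")
    case True
    then show ?thesis using Cons by (simp add: add_strict_left_mono)
  next
    case False
    then have "x < y" using Cons by simp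
    then show ?thesis
      using add_less_le_mono sum_list_le_of_list_all2[OF Cons(2)] by simp
  qed
qed simp

lemma prod_list_eq_0_of_mem: "(0::'a::semiring_1) \<in> set xs \<Longrightarrow> prod_list xs = 0"
  by (induction xs) auto

lemma periodic_mod_cong:
  fixes f :: "int \<Rightarrow> 'b"
  assumes periodic: "\<And>j. f (j + int n) = f j" and "a mod int n = b mod int n"
  shows "f a = f b"
proof -
  have shift: "f (x + int n * k) = f x" for x k
  proof (induction k rule: int_induct[where k = 0])
    case (step1 i)
    have "x + int n * (i + 1) = (x + int n * i) + int n"
      by (simp add: algebra_simps)
    then show ?case by (simp only: periodic step1.IH)
  next
    case (step2 i)
    have "x + int n * i = (x + int n * (i - 1)) + int n"
      by (simp add: algebra_simps)
    then show ?case by (metis periodic step2.IH)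
  qed simp
  obtain k where "a = b + int n * k"
    using assms(2) unfolding mod_eq_dvd_iff dvd_def by (auto simp: algebra_simps)
  then show ?thesis
    by (simp add: shift)
qed

lemma mod_representative:
  assumes "n > 0"
  shows "(a - 1) mod int n + 1 \<in> {1..int n}" "((a - 1) mod int n + 1) mod int n = a mod int n"
proof -
  have "0 \<le> (a - 1) mod int n" "(a - 1) mod int n < int n"
    using assms by simp_all
  then show "(a - 1) mod int n + 1 \<in> {1..int n}"
    by simp
  show "((a - 1) mod int n + 1) mod int n = a mod int n"
    by (simp add: mod_add_left_eq)
qed

lemma sum_period_indicator:
  assumes "n > 0"
  shows "(\<Sum>j\<in>{1..int n}. if j mod int n = a mod int n then 1 else 0) = (1::int)"
proof -
  have "j mod int n = a mod int n \<longleftrightarrow> j = (a - 1) mod int n + 1" if "j \<in> {1..int n}" for j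
  proof -
    have "j - 1 = (j - 1) mod int n"
      using that by simp
    moreover have "j mod int n = a mod int n \<longleftrightarrow> (j - 1) mod int n = (a - 1) mod int n"
      by (simp add: mod_eq_dvd_iff)
    ultimately show ?thesis by auto
  qed
  then have "(\<Sum>j\<in>{1..int n}. if j mod int n = a mod int n then 1 else 0)
      = (\<Sum>j\<in>{1..int n}. if j = (a - 1) mod int n + 1 then 1 else (0::int))"
    by (intro sum.cong) auto
  also have "\<dots> = 1"
    using mod_representative(1)[OF assms] by simp
  finally show ?thesis .
qed

definition lagrange_basis :: "'k::field set \<Rightarrow> 'k \<Rightarrow> 'k poly" where
  "lagrange_basis C c = smult (inverse (\<Prod>d\<in>C - {c}. c - d)) (\<Prod>d\<in>C - {c}. [:- d, 1:])"

lemma poly_lagrange_basis: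
  assumes "finite C" "c \<in> C" "d \<in> C"
  shows "poly (lagrange_basis C c) d = (if d = c then 1 else 0)"
proof -
  have "(\<Prod>e\<in>C - {c}. c - e) \<noteq> 0"
    using assms(1) by simp
  moreover have "d \<noteq> c \<Longrightarrow> (\<Prod>e\<in>C - {c}. d - e) = 0"
    using assms by (simp add: prod_zero_iff)
  ultimately show ?thesis
    by (simp add: lagrange_basis_def poly_prod)
qed

lemma degree_lagrange_basis:
  assumes "finite C" "c \<in> C"
  shows "degree (lagrange_basis C c) < card C"
proof -
  have "degree (\<Prod>d\<in>C - {c}. [:- d, 1:]) \<le> (\<Sum>d\<in>C - {c}. 1)"
    using assms(1) degree_prod_sum_le[of "C - {c}" "\<lambda>d. [:- d, 1:]"] by (simp add: o_def)
  also have "\<dots> < card C"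
    using assms card_gt_0_iff[of C] by auto
  finally show ?thesis
    unfolding lagrange_basis_def using degree_smult_le le_less_trans by blast
qed

lemma sum_lagrange_basis:
  assumes "finite C" "C \<noteq> {}"
  shows "(\<Sum>c\<in>C. lagrange_basis C c) = 1"
proof (rule poly_eqI_degree[of C])
  fix d assume d: "d \<in> C"
  have "poly (\<Sum>c\<in>C. lagrange_basis C c) d = (\<Sum>c\<in>C. if d = c then 1 else 0)"
    unfolding poly_sum using assms(1) d by (intro sum.cong) (simp_all add: poly_lagrange_basis)
  then show "poly (\<Sum>c\<in>C. lagrange_basis C c) d = poly 1 d"
    using assms(1) d by simp
next
  show "degree (\<Sum>c\<in>C. lagrange_basis C c) < card C"
    using assms degree_lagrange_basis by (intro degree_sum_less) (auto simp: card_gt_0_iff)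
  show "degree (1 :: 'a poly) < card C"
    using assms by (simp add: card_gt_0_iff)
qed

lemma linear_mult_lagrange_basis:
  assumes "finite C" "c \<in> C"
  shows "[:- c, 1:] * lagrange_basis C c
    = smult (inverse (\<Prod>d\<in>C - {c}. c - d)) (\<Prod>d\<in>C. [:- d, 1:])"
  using assms by (simp add: lagrange_basis_def mult_smult_right prod.remove)

locale field_algebra =
  fixes \<phi> :: "'k::field \<Rightarrow> 'a::ring_1"
  assumes map_one: "\<phi> 1 = 1"
    and map_add: "\<phi> (x + y) = \<phi> x + \<phi> y"
    and map_mult: "\<phi> (x * y) = \<phi> x * \<phi> y"
    and central: "\<phi> c * a = a * \<phi> c"
begin

lemma map_zero: "\<phi> 0 = 0"
  using map_add[of 0 0] by simp

lemma map_uminus: "\<phi> (- x) = - \<phi> x"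
  using map_add[of x "- x"] by (simp add: map_zero add_eq_0_iff2)

lemma map_diff: "\<phi> (x - y) = \<phi> x - \<phi> y"
  using map_add[of x "- y"] by (simp add: map_uminus)

lemma scalar_left_commute: "a * (\<phi> c * b) = \<phi> c * (a * b)"
  by (metis central mult.assoc)

lemma scalar_scalar: "\<phi> c * (\<phi> d * a) = \<phi> (c * d) * a"
  by (simp add: map_mult mult.assoc)

lemma scalar_cancel:
  assumes "c \<noteq> 0" and "\<phi> c * a = 0"
  shows "a = 0"
proof -
  have "a = \<phi> (inverse c) * (\<phi> c * a)"
    using assms(1) by (simp add: scalar_scalar map_one)
  then show ?thesis using assms(2) by simp
qed

lemma scalar_prod_list_map2: "prod_list (map2 (\<lambda>x y. \<phi> (c x y) * Q x y) xs ys)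
    = \<phi> (prod_list (map2 c xs ys)) * prod_list (map2 Q xs ys)"
proof (induction xs arbitrary: ys)
  case (Cons x xs)
  show ?case
  proof (cases ys)
    case (Cons y ys')
    have "\<phi> (c x y) * Q x y * (\<phi> (prod_list (map2 c xs ys')) * prod_list (map2 Q xs ys'))
        = \<phi> (c x y) * (\<phi> (prod_list (map2 c xs ys')) * (Q x y * prod_list (map2 Q xs ys')))"
      by (simp only: mult.assoc scalar_left_commute[of "Q x y"])
    then show ?thesis using Cons.IH by (simp add: Cons scalar_scalar)
  qed (simp add: map_one)
qed (simp add: map_one)

lemma scalar_action_prod_list:
  assumes "\<And>s. s \<in> set ss \<Longrightarrow> f s * Y = \<phi> (g s) * Y"
  shows "prod_list (map f ss) * Y = \<phi> (prod_list (map g ss)) * Y"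
  using assms
proof (induction ss)
  case (Cons s ss)
  have "prod_list (map f (s # ss)) * Y = f s * (\<phi> (prod_list (map g ss)) * Y)"
    using Cons by (simp add: mult.assoc)
  also have "\<dots> = \<phi> (prod_list (map g ss)) * (\<phi> (g s) * Y)"
    using Cons.prems by (simp add: scalar_left_commute[of "f s"])
  finally show ?case by (simp add: scalar_scalar mult.commute)
qed (simp add: map_one)

lemma left_inverse_eigen:
  assumes "Y * X = 1" and "X * P = \<phi> c * P" and "c \<noteq> 0"
  shows "Y * P = \<phi> (inverse c) * P"
proof -
  have "Y * P = \<phi> (inverse c) * (\<phi> c * (Y * P))"
    using assms(3) by (simp add: scalar_scalar map_one)
  also have "\<phi> c * (Y * P) = P"
    using assms(1,2) by (metis scalar_left_commute mult.assoc mult_1_left)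
  finally show ?thesis .
qed

\<comment> \<open>\<open>poly\<close> needs a commutative ring, so evaluate by Horner's rule through \<open>\<phi>\<close>\<close>
definition peval :: "'k poly \<Rightarrow> 'a \<Rightarrow> 'a" where
  "peval p X = foldr (\<lambda>c y. \<phi> c + X * y) (coeffs p) 0"

lemma peval_0 [simp]: "peval 0 X = 0"
  by (simp add: peval_def)

lemma peval_pCons: "peval (pCons c p) X = \<phi> c + X * peval p X"
  by (cases "c = 0 \<and> p = 0") (auto simp: peval_def cCons_def map_zero)

lemma peval_1 [simp]: "peval 1 X = 1"
  using peval_pCons[of 1 0 X] by (simp add: map_one one_pCons)

lemma peval_monom_linear: "peval [:- c, 1:] X = X - \<phi> c"
  by (simp add: peval_pCons map_one map_uminus)

lemma peval_add: "peval (p + q) X = peval p X + peval q X"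
proof (induction p arbitrary: q rule: pCons_induct)
  case (pCons c p)
  then show ?case
    by (cases q rule: pCons_cases) (simp add: peval_pCons map_add distrib_left add_ac)
qed simp

lemma peval_smult: "peval (smult c p) X = \<phi> c * peval p X"
proof (induction p rule: pCons_induct)
  case (pCons a p)
  then show ?case
    by (simp add: peval_pCons map_mult distrib_left scalar_left_commute[of X] mult.assoc)
qed simp

lemma peval_mult: "peval (p * q) X = peval p X * peval q X"
  by (induction p rule: pCons_induct)
     (simp_all add: peval_add peval_smult peval_pCons map_zero distrib_right mult.assoc)

lemma peval_sum: "peval (sum f A) X = (\<Sum>a\<in>A. peval (f a) X)"
  by (induction A rule: infinite_finite_induct) (simp_all add: peval_add)

lemma peval_prod_list: "peval (prod_list ps) X = prod_list (map (\<lambda>p. peval p X) ps)"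
  by (induction ps) (simp_all add: peval_mult)

lemma peval_commute:
  assumes "Y * X = X * Y"
  shows "Y * peval p X = peval p X * Y"
proof (induction p rule: pCons_induct)
  case (pCons c p)
  have "Y * (X * peval p X) = X * peval p X * Y"
    by (metis assms mult.assoc pCons.IH)
  then show ?case
    by (simp add: peval_pCons distrib_left distrib_right central[of c Y])
qed simp

definition eigenproj :: "'k set \<Rightarrow> 'a \<Rightarrow> 'k \<Rightarrow> 'a" where
  "eigenproj C X c = (if c \<in> C then peval (lagrange_basis C c) X else 0)"

lemma eigenproj_notin: "c \<notin> C \<Longrightarrow> eigenproj C X c = 0"
  by (simp add: eigenproj_def)

lemma sum_eigenproj:
  assumes "finite C" "C \<noteq> {}"
  shows "(\<Sum>c\<in>C. eigenproj C X c) = 1"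
proof -
  have "(\<Sum>c\<in>C. eigenproj C X c) = peval (\<Sum>c\<in>C. lagrange_basis C c) X"
    by (simp add: eigenproj_def peval_sum)
  then show ?thesis
    using assms by (simp add: sum_lagrange_basis)
qed

lemma eigenproj_commute: "Y * X = X * Y \<Longrightarrow> Y * eigenproj C X c = eigenproj C X c * Y"
  by (simp add: eigenproj_def peval_commute)

context
  fixes C :: "'k set" and X :: 'a
  assumes finite: "finite C" and annihilated: "peval (\<Prod>c\<in>C. [:- c, 1:]) X = 0"
begin

lemma eigenproj_eigen: "X * eigenproj C X c = \<phi> c * eigenproj C X c"
proof (cases "c \<in> C")
  case True
  have "X * eigenproj C X c - \<phi> c * eigenproj C X c
      = peval ([:- c, 1:] * lagrange_basis C c) X"
    using True unfolding eigenproj_def peval_mult peval_monom_linear by (simp add: left_diff_distrib)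
  also have "\<dots> = 0"
    using True finite
    by (simp only: linear_mult_lagrange_basis peval_smult annihilated mult_zero_right)
  finally show ?thesis by simp
qed (simp add: eigenproj_notin)

lemma eigenproj_shift:
  assumes nonempty: "C \<noteq> {}" and "q \<noteq> 0" and scale: "X * Y = \<phi> q * Y * X"
  shows "Y * eigenproj C X c = eigenproj C X (q * c) * Y"
proof -
  let ?P = "eigenproj C X"
  \<comment> \<open>\<open>X\<close> acts on \<open>P\<^sub>b Y P\<^sub>d\<close> from the left by \<open>b\<close>, and through \<open>Y\<close> by \<open>q d\<close>\<close>
  have orth: "?P b * Y * ?P d = 0" if "b \<noteq> q * d" for b d
  proof -
    have "?P b * X = \<phi> b * ?P b"
      using eigenproj_commute[of X X] eigenproj_eigen by simp
    then have "\<phi> b * (?P b * Y * ?P d) = ?P b * (X * Y) * ?P d"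
      by (metis mult.assoc)
    also have "\<dots> = ?P b * (\<phi> q * (Y * (\<phi> d * ?P d)))"
      by (simp only: scale eigenproj_eigen mult.assoc)
    also have "\<dots> = \<phi> (q * d) * (?P b * Y * ?P d)"
      by (simp add: scalar_left_commute[of "?P b"] scalar_left_commute[of Y] scalar_scalar mult.assoc)
    finally have "\<phi> (b - q * d) * (?P b * Y * ?P d) = 0"
      by (simp add: map_diff left_diff_distrib)
    then show ?thesis
      using scalar_cancel[of "b - q * d"] that by simp
  qed
  have single: "(\<Sum>b\<in>C. f b) = f a" if "\<And>b. b \<noteq> a \<Longrightarrow> f b = 0" "a \<notin> C \<Longrightarrow> f a = 0"
    for f :: "'k \<Rightarrow> 'a" and a
    using that finite sum.remove[of C a f] by (metis DiffE sum.neutral add_0_right singletonI)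
  have "Y * ?P c = (\<Sum>b\<in>C. ?P b * Y * ?P c)"
    using finite nonempty by (simp add: sum_eigenproj flip: sum_distrib_right)
  also have "\<dots> = ?P (q * c) * Y * ?P c"
    by (rule single) (simp_all add: orth eigenproj_notin)
  also have "\<dots> = (\<Sum>d\<in>C. ?P (q * c) * Y * ?P d)"
    by (rule single[symmetric]) (simp_all add: orth eigenproj_notin \<open>q \<noteq> 0\<close>)
  also have "\<dots> = ?P (q * c) * Y"
    using finite nonempty by (simp add: sum_eigenproj flip: sum_distrib_left)
  finally show ?thesis .
qed

end

lemma prod_list_eigen:
  assumes "\<And>x y. x \<in> set xs \<Longrightarrow> y \<in> set xs \<Longrightarrow> X x * Q y = Q y * X x"
    and "\<And>x. x \<in> set xs \<Longrightarrow> X x * Q x = \<phi> (c x) * Q x"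
  shows "prod_list (map X xs) * prod_list (map Q xs) = \<phi> (prod_list (map c xs)) * prod_list (map Q xs)"
  using assms
proof (induction xs)
  case (Cons x xs)
  have "prod_list (map X xs) * Q x = Q x * prod_list (map X xs)"
    using Cons.prems(1) by (intro prod_list_map_commute) simp
  then have "prod_list (map X (x # xs)) * prod_list (map Q (x # xs))
      = (X x * Q x) * (prod_list (map X xs) * prod_list (map Q xs))"
    by (simp add: mult.assoc flip: mult.assoc[of "prod_list (map X xs)"])
  also have "\<dots> = \<phi> (c x) * (Q x * (\<phi> (prod_list (map c xs)) * prod_list (map Q xs)))"
    using Cons by (simp add: mult.assoc)
  also have "\<dots> = \<phi> (prod_list (map c (x # xs))) * prod_list (map Q (x # xs))"
    by (simp add: scalar_left_commute[of "Q x"] scalar_scalar)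
  finally show ?case .
qed (simp add: map_one)

lemma eigen_affine_combination:
  assumes "X * P = \<phi> c * P" and "Y * P = \<phi> d * P"
  shows "(X * \<phi> x - Y * \<phi> y) * \<phi> z * P = \<phi> ((c * x - d * y) * z) * P"
proof -
  have "(X * \<phi> x - Y * \<phi> y) * \<phi> z = \<phi> z * (\<phi> x * X - \<phi> y * Y)"
    by (simp add: central)
  moreover have "(\<phi> x * X - \<phi> y * Y) * P = \<phi> (c * x - d * y) * P"
    by (simp add: left_diff_distrib mult.assoc assms scalar_scalar map_diff mult.commute)
  ultimately show ?thesis
    by (simp add: mult.assoc scalar_scalar mult.commute)
qed

end

lemma field_algebra_if_qv_algebra: "qv_algebra \<phi> \<Longrightarrow> field_algebra \<phi>"
  unfolding qv_algebra_def field_algebra_def by blast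

\<comment> \<open>The Gaussian binomial \<open>[m, l]\<close> in \<open>v\<close>: the value at \<open>K = v\<^sup>m\<close> of a block of \<open>1\<^sub>\<lambda>\<close>\<close>
definition vbinom :: "int \<Rightarrow> int \<Rightarrow> qv" where
  "vbinom m l = prod_list (map (\<lambda>s. (vq powi m * vq powi (- s + 1) - inverse (vq powi m) * vq powi (s - 1))
                                    * (1 / (vq powi s - vq powi (- s)))) [1..l])"

lemma vbinom_eq_0: "0 \<le> m \<Longrightarrow> m < l \<Longrightarrow> vbinom m l = 0"
  unfolding vbinom_def prod_list_zero_iff
  by (auto simp: image_iff power_int_minus intro!: bexI[of _ "m + 1"])

lemma vbinom_self: "vbinom l l = 1"
proof -
  define N where "N t = vq powi t - vq powi (- t)" for t
  have N_nonzero: "N s \<noteq> 0" if "1 \<le> s" for s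
    using that vq_powi_eq_iff[of s "- s"] by (auto simp: N_def)
  have factor: "(vq powi l * vq powi (- s + 1) - inverse (vq powi l) * vq powi (s - 1))
      * (1 / (vq powi s - vq powi (- s))) = N (l + 1 - s) / N s" for s
  proof -
    have "vq powi l * vq powi (- s + 1) = vq powi (l + 1 - s)"
      "inverse (vq powi l) * vq powi (s - 1) = vq powi (- (l + 1 - s))"
      using vq_nonzero
      by (simp_all add: power_int_minus[symmetric] power_int_add[symmetric] algebra_simps)
    then show ?thesis by (simp add: N_def divide_inverse)
  qed
  have "vbinom l l = (\<Prod>s\<in>{1..l}. N (l + 1 - s)) / (\<Prod>s\<in>{1..l}. N s)"
    unfolding vbinom_def factor
    by (simp add: prod_dividef flip: prod.distinct_set_conv_list)
  also have "(\<Prod>s\<in>{1..l}. N (l + 1 - s)) = (\<Prod>s\<in>{1..l}. N s)"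
    by (rule prod.reindex_bij_witness[where i="\<lambda>s. l + 1 - s" and j="\<lambda>s. l + 1 - s"]) auto
  finally show ?thesis
    using N_nonzero by (simp add: prod_zero_iff)
qed

lemma eps_plus_swap: "eps_plus n j i = alpha n i j"
proof -
  have "i mod int n = (j - 1) mod int n \<longleftrightarrow> j mod int n = (i + 1) mod int n"
    by (simp add: mod_eq_dvd_iff) (metis dvd_minus_iff minus_diff_eq diff_diff_eq2 diff_add_eq)
  then show ?thesis
    unfolding eps_plus_def alpha_def by (auto simp: eq_commute[of "j mod _"])
qed

lemma alpha_periodic: "alpha n i (j + int n) = alpha n i j"
  by (simp add: alpha_def)

lemma alpha_self: "alpha n i i = 1"
  by (simp add: alpha_def)

lemma alpha_succ:
  assumes "n \<ge> 2"
  shows "alpha n i (i + 1) = -1"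
proof -
  have "(i + 1) mod int n \<noteq> i mod int n"
    using assms by (simp add: mod_eq_dvd_iff zdvd_not_zless)
  then show ?thesis
    by (simp add: alpha_def)
qed

lemma alpha_nonneg: "j mod int n \<noteq> (i + 1) mod int n \<Longrightarrow> alpha n i j \<ge> 0"
  by (simp add: alpha_def)

lemma alpha_nonpos: "j mod int n \<noteq> i mod int n \<Longrightarrow> alpha n i j \<le> 0"
  by (simp add: alpha_def)

lemma sum_alpha:
  assumes "n \<ge> 2"
  shows "sum (alpha n i) {1..int n} = 0"
proof -
  have "alpha n i j = (if j mod int n = i mod int n then 1 else 0)
      - (if j mod int n = (i + 1) mod int n then 1 else 0)" for j
    using alpha_succ[OF assms, of i] by (auto simp: alpha_def)
  then show ?thesis
    using assms by (simp add: sum_subtractf sum_period_indicator)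
qed

lemma prod_list_vq_powi: "prod_list (map (\<lambda>m. vq powi m) ms) = vq powi sum_list ms"
  by (induction ms) (simp_all add: power_int_add vq_nonzero)

locale T_algebra = field_algebra \<phi> for \<phi> :: "qv \<Rightarrow> 'a::ring_1" +
  fixes n r :: nat and E F K Kinv :: "int \<Rightarrow> 'a"
  assumes rels: "T_rels n r \<phi> E F K Kinv"
begin

lemma K_commute: "K a * K b = K b * K a"
  using rels by (simp add: T_rels_def)

lemma Kinv_K: "Kinv a * K a = 1"
  using rels by (simp add: T_rels_def)

lemma K_E: "K a * E b = \<phi> (vq powi eps_plus n a b) * E b * K a"
  using rels by (simp add: T_rels_def)

lemma K_F: "K a * F b = \<phi> (vq powi (- eps_plus n a b)) * F b * K a"
  using rels by (simp add: T_rels_def)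

lemma prod_K: "prod_list (map K [1..int n]) = \<phi> (vq ^ r)"
  using rels by (simp add: T_rels_def)

lemma prod_K_sub_vq_power_eq_0: "prod_list (map (\<lambda>j. K a - \<phi> (vq ^ j)) [0..<r+1]) = 0"
  using rels by (simp add: T_rels_def)

definition Kspec :: "qv set" where
  "Kspec = (\<lambda>m. vq powi m) ` {0..int r}"

definition Kproj :: "int \<Rightarrow> int \<Rightarrow> 'a" where
  "Kproj a m = eigenproj Kspec (K a) (vq powi m)"

lemma finite_Kspec: "finite Kspec"
  by (simp add: Kspec_def)

lemma K_annihilated: "peval (\<Prod>c\<in>Kspec. [:- c, 1:]) (K a) = 0"
proof -
  have "{0..int r} = int ` {0..<r+1}"
    by (auto simp: image_iff intro!: bexI[of _ "nat _"])
  then have "Kspec = (\<lambda>j. vq ^ j) ` {0..<r+1}"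
    by (simp add: Kspec_def image_image)
  moreover have "inj (\<lambda>j. vq ^ j)"
    using vq_powi_eq_iff[of "int _" "int _"] by (auto intro: injI)
  ultimately have "(\<Prod>c\<in>Kspec. [:- c, 1:]) = (\<Prod>j\<in>{0..<r+1}. [:- (vq ^ j), 1:])"
    by (simp add: prod.reindex inj_on_subset)
  also have "\<dots> = prod_list (map (\<lambda>j. [:- (vq ^ j), 1:]) [0..<r+1])"
    by (metis distinct_upt prod.distinct_set_conv_list set_upt)
  finally show ?thesis
    by (simp only: peval_prod_list peval_monom_linear map_map o_def prod_K_sub_vq_power_eq_0)
qed

lemma Kproj_eq_0: "m \<notin> {0..int r} \<Longrightarrow> Kproj a m = 0"
  by (simp add: Kproj_def Kspec_def eigenproj_notin image_iff vq_powi_eq_iff)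

lemma sum_Kproj: "(\<Sum>m\<in>{0..int r}. Kproj a m) = 1"
proof -
  have "(\<Sum>m\<in>{0..int r}. Kproj a m) = (\<Sum>c\<in>Kspec. eigenproj Kspec (K a) c)"
    by (simp add: Kproj_def Kspec_def sum.reindex inj_on_def vq_powi_eq_iff)
  also have "\<dots> = 1"
    by (rule sum_eigenproj) (simp_all add: finite_Kspec Kspec_def)
  finally show ?thesis .
qed

lemma K_Kproj: "K a * Kproj a m = \<phi> (vq powi m) * Kproj a m"
  unfolding Kproj_def using finite_Kspec K_annihilated by (rule eigenproj_eigen)

lemma Kinv_Kproj: "Kinv a * Kproj a m = \<phi> (inverse (vq powi m)) * Kproj a m"
  by (rule left_inverse_eigen[OF Kinv_K K_Kproj]) (simp add: vq_nonzero)

lemma K_Kproj_commute: "K b * Kproj a m = Kproj a m * K b"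
  unfolding Kproj_def by (rule eigenproj_commute) (rule K_commute)

lemma Kproj_shift:
  assumes "K a * Y = \<phi> (vq powi e) * Y * K a"
  shows "Y * Kproj a m = Kproj a (m + e) * Y"
proof -
  have "Kspec \<noteq> {}" "vq powi e \<noteq> 0"
    by (simp_all add: Kspec_def vq_nonzero)
  from eigenproj_shift[OF finite_Kspec K_annihilated this assms]
  show ?thesis
    using vq_nonzero by (simp add: Kproj_def power_int_add mult.commute)
qed

lemma E_Kproj: "E i * Kproj j m = Kproj j (m + alpha n i j) * E i"
  by (rule Kproj_shift) (simp add: K_E eps_plus_swap)

lemma F_Kproj: "F i * Kproj j m = Kproj j (m + - alpha n i j) * F i"
  by (rule Kproj_shift) (simp add: K_F eps_plus_swap)

definition Kbinom :: "int \<Rightarrow> int \<Rightarrow> 'a" where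
  "Kbinom a l = prod_list (map (\<lambda>s.
      (K a * \<phi> (vq powi (- s + 1)) - Kinv a * \<phi> (vq powi (s - 1))) * \<phi> (1 / (vq powi s - vq powi (- s))))
     [1..l])"

lemma one_lam_eq_prod_Kbinom: "one_lam n \<phi> K Kinv lam = prod_list (map (\<lambda>a. Kbinom a (lam a)) [1..int n])"
  by (simp add: one_lam_def Kbinom_def)

lemma Kbinom_Kproj: "Kbinom a l * Kproj a m = \<phi> (vbinom m l) * Kproj a m"
  unfolding Kbinom_def vbinom_def
  by (intro scalar_action_prod_list eigen_affine_combination K_Kproj Kinv_Kproj)

lemma Kbinom_eq_sum: "Kbinom a l = (\<Sum>m\<in>{0..int r}. \<phi> (vbinom m l) * Kproj a m)"
proof -
  have "Kbinom a l = Kbinom a l * (\<Sum>m\<in>{0..int r}. Kproj a m)"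
    by (simp add: sum_Kproj)
  then show ?thesis
    by (simp add: sum_distrib_left Kbinom_Kproj)
qed

lemma prod_K_prod_Kproj:
  assumes "length ms = length js"
  shows "prod_list (map K js) * prod_list (map2 Kproj js ms)
    = \<phi> (vq powi sum_list ms) * prod_list (map2 Kproj js ms)"
proof -
  have "prod_list (map (K \<circ> fst) (zip js ms)) * prod_list (map2 Kproj js ms)
      = \<phi> (prod_list (map (\<lambda>(j, m). vq powi m) (zip js ms))) * prod_list (map2 Kproj js ms)"
    by (rule prod_list_eigen) (auto simp: K_Kproj intro: K_Kproj_commute)
  moreover have "map (\<lambda>(j, m). vq powi m) (zip js ms) = map (\<lambda>m. vq powi m) (map snd (zip js ms))"
    by (simp add: split_def)
  ultimately show ?thesis
    using assms by (simp add: map_fst_zip map_snd_zip prod_list_vq_powi flip: map_map)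
qed

lemma prod_Kproj_eq_0:
  assumes "length ms = n" and "sum_list ms \<noteq> int r"
  shows "prod_list (map2 Kproj [1..int n] ms) = 0"
proof -
  have "\<phi> (vq powi int r) * prod_list (map2 Kproj [1..int n] ms)
      = \<phi> (vq powi sum_list ms) * prod_list (map2 Kproj [1..int n] ms)"
    using prod_K_prod_Kproj[of ms "[1..int n]"] assms(1) by (simp add: prod_K)
  then have "\<phi> (vq powi int r - vq powi sum_list ms) * prod_list (map2 Kproj [1..int n] ms) = 0"
    by (simp add: map_diff left_diff_distrib)
  moreover have "vq powi int r - vq powi sum_list ms \<noteq> 0"
    using assms(2) vq_powi_eq_iff[of "int r"] by simp
  ultimately show ?thesis
    using scalar_cancel by blast
qed

lemma one_lam_eq_prod_Kproj:
  assumes lam: "comp_nr n r lam"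
  shows "one_lam n \<phi> K Kinv lam = prod_list (map (\<lambda>j. Kproj j (lam j)) [1..int n])"
proof -
  define js where "js = [1..int n]"
  define lam0 where "lam0 = map lam js"
  define Tup where "Tup = {ms. set ms \<subseteq> {0..int r} \<and> length ms = length js}"
  define summand where "summand ms = \<phi> (prod_list (map2 (\<lambda>j m. vbinom m (lam j)) js ms))
    * prod_list (map2 Kproj js ms)" for ms
  have lam_nonneg: "lam j \<ge> 0" for j
    using lam by (simp add: comp_nr_def)
  have sum_lam0: "sum_list lam0 = int r"
    using lam by (simp add: comp_nr_def lam0_def js_def interv_sum_list_conv_sum_set_int)
  have "lam j \<le> int r" if "j \<in> {1..int n}" for j
    using lam that member_le_sum[of j "{1..int n}" lam] lam_nonneg by (simp add: comp_nr_def)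
  then have lam0_in: "lam0 \<in> Tup"
    by (auto simp: Tup_def lam0_def js_def lam_nonneg)
  have vanish: "summand ms = 0" if "ms \<in> Tup" "ms \<noteq> lam0" for ms
  proof (cases "list_all2 (\<le>) lam0 ms")
    case True
    then have "sum_list ms \<noteq> int r"
      using sum_list_less_of_list_all2[OF True] that(2) sum_lam0 by simp
    then show ?thesis
      using that(1) by (simp add: summand_def Tup_def js_def prod_Kproj_eq_0)
  next
    case False
    have len: "length ms = length js"
      using that(1) by (simp add: Tup_def)
    then obtain k where k: "k < length js" "ms ! k < lam (js ! k)"
      using False by (auto simp: list_all2_conv_all_nth lam0_def not_le)
    have "ms ! k \<in> set ms"
      using k(1) len by simp
    then have "ms ! k \<ge> 0"
      using that(1) by (auto simp: Tup_def)
    then have "vbinom (ms ! k) (lam (js ! k)) = 0"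
      using k(2) by (rule vbinom_eq_0)
    moreover have "vbinom (ms ! k) (lam (js ! k)) \<in> set (map2 (\<lambda>j m. vbinom m (lam j)) js ms)"
      using k(1) len by (force simp: set_conv_nth)
    ultimately have "prod_list (map2 (\<lambda>j m. vbinom m (lam j)) js ms) = 0"
      by (metis prod_list_zero_iff)
    then show ?thesis
      by (simp add: summand_def map_zero)
  qed
  have "one_lam n \<phi> K Kinv lam = prod_list (map (\<lambda>j. \<Sum>m\<in>{0..int r}. \<phi> (vbinom m (lam j)) * Kproj j m) js)"
    by (simp add: one_lam_eq_prod_Kbinom Kbinom_eq_sum js_def)
  also have "\<dots> = (\<Sum>ms\<in>Tup. prod_list (map2 (\<lambda>j m. \<phi> (vbinom m (lam j)) * Kproj j m) js ms))"
    unfolding Tup_def by (rule prod_list_sum_distrib) simp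
  also have "\<dots> = (\<Sum>ms\<in>Tup. summand ms)"
    unfolding summand_def scalar_prod_list_map2 ..
  also have "\<dots> = summand lam0"
  proof -
    have "finite Tup"
      unfolding Tup_def by (rule finite_lists_length_eq) simp
    then show ?thesis
      using lam0_in vanish by (subst sum.mono_neutral_right[of Tup "{lam0}"]) auto
  qed
  also have "\<dots> = prod_list (map (\<lambda>j. Kproj j (lam j)) js)"
    using map2_map_map[of "\<lambda>j m. vbinom m (lam j)" "\<lambda>j. j" js lam]
      map2_map_map[of Kproj "\<lambda>j. j" js lam]
    by (simp add: summand_def lam0_def vbinom_self map_one map_replicate_const)
  finally show ?thesis
    by (simp add: js_def)
qed

lemma one_lam_shift:
  assumes "n > 0" and lam: "comp_nr n r lam"
    and shift: "\<And>j m. X * Kproj j m = Kproj j (m + \<delta> j) * X"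
    and \<delta>_periodic: "\<And>j. \<delta> (j + int n) = \<delta> j"
    and \<delta>_sum: "sum \<delta> {1..int n} = 0"
    and \<delta>_j0: "\<delta> j0 = -1"
    and \<delta>_nonneg: "\<And>j. j mod int n \<noteq> j0 mod int n \<Longrightarrow> \<delta> j \<ge> 0"
  shows "X * one_lam n \<phi> K Kinv lam
    = (if lam j0 > 0 then one_lam n \<phi> K Kinv (\<lambda>j. lam j + \<delta> j) * X else 0)"
proof -
  have lam_periodic: "\<And>j. lam (j + int n) = lam j" and lam_nonneg: "\<And>j. lam j \<ge> 0"
    and sum_lam: "sum lam {1..int n} = int r"
    using lam by (simp_all add: comp_nr_def)
  have moved: "X * one_lam n \<phi> K Kinv lam = prod_list (map (\<lambda>j. Kproj j (lam j + \<delta> j)) [1..int n]) * X"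
    by (simp add: one_lam_eq_prod_Kproj[OF lam] prod_list_map_shift[where P = Kproj, OF shift])
  show ?thesis
  proof (cases "lam j0 > 0")
    case True
    have "comp_nr n r (\<lambda>j. lam j + \<delta> j)"
      unfolding comp_nr_def
    proof (intro conjI allI)
      fix j
      show "lam (j + int n) + \<delta> (j + int n) = lam j + \<delta> j"
        by (simp add: lam_periodic \<delta>_periodic)
      show "0 \<le> lam j + \<delta> j"
      proof (cases "j mod int n = j0 mod int n")
        case True
        then have "lam j = lam j0" "\<delta> j = \<delta> j0"
          using periodic_mod_cong lam_periodic \<delta>_periodic by blast+
        then show ?thesis using \<open>lam j0 > 0\<close> \<delta>_j0 by simp
      next
        case False
        then show ?thesis using lam_nonneg[of j] \<delta>_nonneg[of j] by simp
      qed
    next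
      show "(\<Sum>j = 1..int n. lam j + \<delta> j) = int r"
        by (simp add: sum.distrib sum_lam \<delta>_sum)
    qed
    then show ?thesis
      using True moved by (simp add: one_lam_eq_prod_Kproj)
  next
    case False
    define j1 where "j1 = (j0 - 1) mod int n + 1"
    have j1: "j1 \<in> {1..int n}" "j1 mod int n = j0 mod int n"
      unfolding j1_def using mod_representative[OF \<open>n > 0\<close>] by simp_all
    have "lam j1 = lam j0" "\<delta> j1 = \<delta> j0"
      using periodic_mod_cong lam_periodic \<delta>_periodic j1(2) by blast+
    then have "lam j1 + \<delta> j1 = -1"
      using False lam_nonneg[of j0] \<delta>_j0 by simp
    then have "Kproj j1 (lam j1 + \<delta> j1) = 0"
      by (simp add: Kproj_eq_0)
    then have "prod_list (map (\<lambda>j. Kproj j (lam j + \<delta> j)) [1..int n]) = 0"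
      using j1(1) by (intro prod_list_eq_0_of_mem) (force simp: image_iff)
    then show ?thesis
      using False moved by simp
  qed
qed

end

theorem lemma2p2p6:
  fixes \<phi> :: "qv \<Rightarrow> 'a::ring_1" and E F K Kinv :: "int \<Rightarrow> 'a"
    and n r :: nat and lam :: "int \<Rightarrow> int" and i :: int
  assumes "r \<ge> 3" and "n > r"
    and "qv_algebra \<phi>"
    and "T_rels n r \<phi> E F K Kinv"
    and "comp_nr n r lam"
    and "1 \<le> i" and "i \<le> int n"
  shows "(E i * one_lam n \<phi> K Kinv lam =
            (if lam (i + 1) > 0 then one_lam n \<phi> K Kinv (\<lambda>j. lam j + alpha n i j) * E i else 0))
       \<and> (F i * one_lam n \<phi> K Kinv lam =
            (if lam i > 0 then one_lam n \<phi> K Kinv (\<lambda>j. lam j - alpha n i j) * F i else 0))"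
proof -
  \<comment> \<open>From \<open>3 \<le> r < n\<close> only \<open>n \<ge> 2\<close> is used.\<close>
  interpret T_algebra \<phi> n r E F K Kinv
    using assms(3,4) by (simp add: T_algebra_def T_algebra_axioms_def field_algebra_if_qv_algebra)
  have n: "n \<ge> 2" "n > 0"
    using assms(1,2) by simp_all
  have "E i * one_lam n \<phi> K Kinv lam =
      (if lam (i + 1) > 0 then one_lam n \<phi> K Kinv (\<lambda>j. lam j + alpha n i j) * E i else 0)"
    by (rule one_lam_shift[OF n(2) assms(5) E_Kproj])
       (simp_all add: alpha_periodic sum_alpha alpha_succ alpha_nonneg n)
  moreover have "F i * one_lam n \<phi> K Kinv lam =
      (if lam i > 0 then one_lam n \<phi> K Kinv (\<lambda>j. lam j + - alpha n i j) * F i else 0)"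
    by (rule one_lam_shift[OF n(2) assms(5) F_Kproj])
       (simp_all add: alpha_periodic sum_alpha alpha_self alpha_nonpos n sum_negf)
  ultimately show ?thesis
    by simp
qed

end
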